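(* Let $\Omega=(0,L_x)\times(0,L_y)$ discretized by the cell-centered grid with $N_x,N_y$ cells of sizes $h_x=L_x/N_x$, $h_y=L_y/N_y$. Let $M>0$, $\beta>0$, $\alpha\ge 0$, $\Delta t>0$, $F(z)=z^4/4$. Given cell-centered grid functions $Z^{n-1},Z^n,\Psi^n$ and a scalar $R^n$ ($n\ge1$) with $E_1^h(\tilde Z^{n+1/2})>0$, consider the scheme: find grid functions $Z^{n+1},\Psi^{n+1},W^{n+1/2}$ and a scalar $R^{n+1}$ such that $$\Psi^{n+1}-\Psi^{n}+\beta\Delta t\Psi^{n+1/2}=M\Delta t\,\Delta_hW^{n+1/2},\qquad \Delta t\,\Psi^{n+1/2}=Z^{n+1}-Z^n,$$ $$W^{n+1/2}=\Delta_h^2Z^{n+1/2}+2\Delta_h\tilde{Z}^{n+1/2}+\alpha Z^{n+1/2}+\frac{R^{n+1/2}}{\sqrt{E_1^h(\tilde{Z}^{n+1/2})}}F'(\tilde{Z}^{n+1/2}),$$ $$R^{n+1}-R^n=\frac{1}{2\sqrt{E_1^h(\tilde{Z}^{n+1/2}) }}(F'(\tilde{Z}^{n+1/2}),Z^{n+1}-Z^n)_m,$$ with $f^{n+1/2}=(f^{n+1}+f^n)/2$ and $\tilde Z^{n+1/2}=(3Z^n-Z^{n-1})/2$, where all grid functions $Z$, $W$ and $\Delta_hZ$ are extended by the discrete homogeneous Neumann conditions $Z_{0,j}=Z_{1,j}$, $Z_{N_x+1,j}=Z_{N_x,j}$, $Z_{i,0}=Z_{i,1}$, $Z_{i,N_y+1}=Z_{i,N_y}$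 (and identically for $W$ and for $\Delta_hZ$). Then: (i) the scheme has a unique solution; (ii) if $(\Psi^n,1)_m=0$, then $(\Psi^{n+1},1)_m=0$ and $(Z^{n+1},1)_m=(Z^n,1)_m$ (so, if $(\Psi^0,1)_m=0$, mass is conserved at every step); (iii) under this mean-zero condition, $$\tilde{\mathcal{E}}_d(Z^{n+1},R^{n+1},\Psi^{n+1})-\tilde{\mathcal{E}}_d(Z^n,R^n,\Psi^n)\leq -\frac{\beta}{M}\Delta t\,\|\Psi^{n+1/2}\|_{-1}^2,$$ where $\tilde{\mathcal{E}}_d(Z^n,R^n,\Psi^n)=\mathcal{E}_d(Z^n,R^n,\Psi^n)+\frac 1 2\|\nabla_hZ^{n}-\nabla_hZ^{n-1}\|^2$.
   Context: Difference operators: $[d_xg]_{i+1/2,j}=(g_{i+1,j}-g_{i,j})/h_x$, $[d_yg]_{i,j+1/2}=(g_{i,j+1}-g_{i,j})/h_y$, $[D_xg]_{i,j}=(g_{i+1/2,j}-g_{i-1/2,j})/h_x$, $[D_yg]_{i,j}=(g_{i,j+1/2}-g_{i,j-1/2})/h_y$, $\Delta_hg=D_x(d_xg)+D_y(d_yg)$ at cell centers. Inner products: $(f,g)_m=\sum_{i=1}^{N_x}\sum_{j=1}^{N_y}h_xh_yf_{i,j}g_{i,j}$, $(f,g)_x=\sum_{i=1}^{N_x-1}\sum_{j=1}^{N_y}h_xh_yf_{i+1/2,j}g_{i+1/2,j}$, $(f,g)_y=\sum_{i=1}^{N_x}\sum_{j=1}^{N_y-1}h_xh_yf_{i,j+1/2}g_{i,j+1/2}$;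 $\|f\|_m^2=(f,f)_m$, $\|\nabla_hZ\|^2=(d_xZ,d_xZ)_x+(d_yZ,d_yZ)_y$. $E_1^h(Z)=\sum_{i,j}h_xh_yF(Z_{i,j})$. Discrete $H^{-1}$ norm: for $\phi$ with $(\phi,1)_m=0$, let $\eta_\phi$ with $(\eta_\phi,1)_m=0$ solve $-\Delta_h\eta_\phi=\phi$ under the discrete homogeneous Neumann extension; $(\phi_1,\phi_2)_{-1}=(d_x\eta_{\phi_1},d_x\eta_{\phi_2})_x+(d_y\eta_{\phi_1},d_y\eta_{\phi_2})_y$ and $\|\phi\|_{-1}=\sqrt{(\phi,\phi)_{-1}}$. Discrete pseudo energy: $\mathcal{E}_d(Z,R,\Psi)=\frac 1 2 \|\Delta_hZ\|_m^2-\|\nabla_hZ\|^2+\frac \alpha 2 \|Z\|_m^2+R^2+\frac{1}{2M}\|\Psi\|_{-1}^2$. *)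

theory Defs
  imports Complex_Main
begin

type_synonym grid = "nat \<Rightarrow> nat \<Rightarrow> real"

text \<open>Cell-centred grid functions are indexed by i in 1..Nx, j in 1..Ny.
 Face values f_{i+1/2,j} are stored at index (i,j); f_{i,j+1/2} likewise at (i,j).\<close>

definition in_grid :: "nat \<Rightarrow> nat \<Rightarrow> nat \<Rightarrow> nat \<Rightarrow> bool" where
  "in_grid Nx Ny i j \<longleftrightarrow> 1 \<le> i \<and> i \<le> Nx \<and> 1 \<le> j \<and> j \<le> Ny"

definition gridfun :: "nat \<Rightarrow> nat \<Rightarrow> grid \<Rightarrow> bool" where
  "gridfun Nx Ny g \<longleftrightarrow> (\<forall>i j. \<not> in_grid Nx Ny i j \<longrightarrow> g i j = 0)"

text \<open>Discrete homogeneous Neumann extension: Z_{0,j}=Z_{1,j}, Z_{Nx+1,j}=Z_{Nx,j}, etc.\<close>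
definition ext :: "nat \<Rightarrow> nat \<Rightarrow> grid \<Rightarrow> grid" where
  "ext Nx Ny g i j = g (min (max i 1) Nx) (min (max j 1) Ny)"

definition dx :: "nat \<Rightarrow> nat \<Rightarrow> real \<Rightarrow> grid \<Rightarrow> grid" where
  "dx Nx Ny hx g i j = (ext Nx Ny g (i + 1) j - ext Nx Ny g i j) / hx"

definition dy :: "nat \<Rightarrow> nat \<Rightarrow> real \<Rightarrow> grid \<Rightarrow> grid" where
  "dy Nx Ny hy g i j = (ext Nx Ny g i (j + 1) - ext Nx Ny g i j) / hy"

text \<open>[D_x f]_{i,j} = (f_{i+1/2,j} - f_{i-1/2,j})/hx with face i-1/2 stored at i-1.\<close>
definition Dx :: "real \<Rightarrow> grid \<Rightarrow> grid" where
  "Dx hx f i j = (f i j - f (i - 1) j) / hx"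

definition Dy :: "real \<Rightarrow> grid \<Rightarrow> grid" where
  "Dy hy f i j = (f i j - f i (j - 1)) / hy"

definition lap :: "nat \<Rightarrow> nat \<Rightarrow> real \<Rightarrow> real \<Rightarrow> grid \<Rightarrow> grid" where
  "lap Nx Ny hx hy g i j = Dx hx (dx Nx Ny hx g) i j + Dy hy (dy Nx Ny hy g) i j"

definition ip_m :: "nat \<Rightarrow> nat \<Rightarrow> real \<Rightarrow> real \<Rightarrow> grid \<Rightarrow> grid \<Rightarrow> real" where
  "ip_m Nx Ny hx hy f g = (\<Sum>i\<in>{1..Nx}. \<Sum>j\<in>{1..Ny}. hx * hy * f i j * g i j)"

definition ip_x :: "nat \<Rightarrow> nat \<Rightarrow> real \<Rightarrow> real \<Rightarrow> grid \<Rightarrow> grid \<Rightarrow> real" where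
  "ip_x Nx Ny hx hy f g = (\<Sum>i\<in>{1..Nx-1}. \<Sum>j\<in>{1..Ny}. hx * hy * f i j * g i j)"

definition ip_y :: "nat \<Rightarrow> nat \<Rightarrow> real \<Rightarrow> real \<Rightarrow> grid \<Rightarrow> grid \<Rightarrow> real" where
  "ip_y Nx Ny hx hy f g = (\<Sum>i\<in>{1..Nx}. \<Sum>j\<in>{1..Ny-1}. hx * hy * f i j * g i j)"

definition norm_m2 :: "nat \<Rightarrow> nat \<Rightarrow> real \<Rightarrow> real \<Rightarrow> grid \<Rightarrow> real" where
  "norm_m2 Nx Ny hx hy f = ip_m Nx Ny hx hy f f"

definition grad_diff_norm2 :: "nat \<Rightarrow> nat \<Rightarrow> real \<Rightarrow> real \<Rightarrow> grid \<Rightarrow> grid \<Rightarrow> real" where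
  "grad_diff_norm2 Nx Ny hx hy Z Z' =
     ip_x Nx Ny hx hy (\<lambda>i j. dx Nx Ny hx Z i j - dx Nx Ny hx Z' i j)
                      (\<lambda>i j. dx Nx Ny hx Z i j - dx Nx Ny hx Z' i j)
   + ip_y Nx Ny hx hy (\<lambda>i j. dy Nx Ny hy Z i j - dy Nx Ny hy Z' i j)
                      (\<lambda>i j. dy Nx Ny hy Z i j - dy Nx Ny hy Z' i j)"

definition grad_norm2 :: "nat \<Rightarrow> nat \<Rightarrow> real \<Rightarrow> real \<Rightarrow> grid \<Rightarrow> real" where
  "grad_norm2 Nx Ny hx hy Z =
     ip_x Nx Ny hx hy (dx Nx Ny hx Z) (dx Nx Ny hx Z) + ip_y Nx Ny hx hy (dy Nx Ny hy Z) (dy Nx Ny hy Z)"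

definition Fpot :: "real \<Rightarrow> real" where "Fpot z = z ^ 4 / 4"
definition dFpot :: "real \<Rightarrow> real" where "dFpot z = z ^ 3"

definition E1h :: "nat \<Rightarrow> nat \<Rightarrow> real \<Rightarrow> real \<Rightarrow> grid \<Rightarrow> real" where
  "E1h Nx Ny hx hy Z = (\<Sum>i\<in>{1..Nx}. \<Sum>j\<in>{1..Ny}. hx * hy * Fpot (Z i j))"

definition eta :: "nat \<Rightarrow> nat \<Rightarrow> real \<Rightarrow> real \<Rightarrow> grid \<Rightarrow> grid" where
  "eta Nx Ny hx hy \<phi> = (THE \<eta>. gridfun Nx Ny \<eta> \<and> ip_m Nx Ny hx hy \<eta> (\<lambda>_ _. 1) = 0 \<and>
      (\<forall>i j. in_grid Nx Ny i j \<longrightarrow> - lap Nx Ny hx hy \<eta> i j = \<phi> i j))"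

definition ip_neg1 :: "nat \<Rightarrow> nat \<Rightarrow> real \<Rightarrow> real \<Rightarrow> grid \<Rightarrow> grid \<Rightarrow> real" where
  "ip_neg1 Nx Ny hx hy \<phi>1 \<phi>2 =
     ip_x Nx Ny hx hy (dx Nx Ny hx (eta Nx Ny hx hy \<phi>1)) (dx Nx Ny hx (eta Nx Ny hx hy \<phi>2))
   + ip_y Nx Ny hx hy (dy Nx Ny hy (eta Nx Ny hx hy \<phi>1)) (dy Nx Ny hy (eta Nx Ny hx hy \<phi>2))"

definition norm_neg1 :: "nat \<Rightarrow> nat \<Rightarrow> real \<Rightarrow> real \<Rightarrow> grid \<Rightarrow> real" where
  "norm_neg1 Nx Ny hx hy \<phi> = sqrt (ip_neg1 Nx Ny hx hy \<phi> \<phi>)"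

definition Ed :: "nat \<Rightarrow> nat \<Rightarrow> real \<Rightarrow> real \<Rightarrow> real \<Rightarrow> real \<Rightarrow> grid \<Rightarrow> real \<Rightarrow> grid \<Rightarrow> real" where
  "Ed Nx Ny hx hy \<alpha> M Z R \<Psi> =
     1/2 * norm_m2 Nx Ny hx hy (lap Nx Ny hx hy Z) - grad_norm2 Nx Ny hx hy Z
     + \<alpha>/2 * norm_m2 Nx Ny hx hy Z + R^2 + 1/(2*M) * (norm_neg1 Nx Ny hx hy \<Psi>)^2"

definition Ed_tilde :: "nat \<Rightarrow> nat \<Rightarrow> real \<Rightarrow> real \<Rightarrow> real \<Rightarrow> real \<Rightarrow> grid \<Rightarrow> grid \<Rightarrow> real \<Rightarrow> grid \<Rightarrow> real" where
  "Ed_tilde Nx Ny hx hy \<alpha> M Z Zprev R \<Psi> =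
     Ed Nx Ny hx hy \<alpha> M Z R \<Psi> + 1/2 * grad_diff_norm2 Nx Ny hx hy Z Zprev"

text \<open>The scheme: given Z^{n-1} (Zm), Z^n (Z0), Psi^n (Psi0), R^n (R0),
  the unknowns Z^{n+1} (Z1), Psi^{n+1} (Psi1), W^{n+1/2} (W), R^{n+1} (R1)
  satisfy the equations at every grid cell.\<close>
definition scheme :: "nat \<Rightarrow> nat \<Rightarrow> real \<Rightarrow> real \<Rightarrow> real \<Rightarrow> real \<Rightarrow> real \<Rightarrow> real \<Rightarrow>
    grid \<Rightarrow> grid \<Rightarrow> grid \<Rightarrow> real \<Rightarrow> grid \<Rightarrow> grid \<Rightarrow> grid \<Rightarrow> real \<Rightarrow> bool" where
  "scheme Nx Ny hx hy M \<beta> \<alpha> dt Zm Z0 Psi0 R0 Z1 Psi1 W R1 \<longleftrightarrow>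
    (let Zt = (\<lambda>i j. (3 * Z0 i j - Zm i j) / 2);
         Zh = (\<lambda>i j. (Z1 i j + Z0 i j) / 2);
         Psih = (\<lambda>i j. (Psi1 i j + Psi0 i j) / 2);
         Rh = (R1 + R0) / 2;
         E1 = E1h Nx Ny hx hy Zt
     in (\<forall>i j. in_grid Nx Ny i j \<longrightarrow>
            Psi1 i j - Psi0 i j + \<beta> * dt * Psih i j = M * dt * lap Nx Ny hx hy W i j
          \<and> dt * Psih i j = Z1 i j - Z0 i j
          \<and> W i j = lap Nx Ny hx hy (lap Nx Ny hx hy Zh) i j + 2 * lap Nx Ny hx hy Zt i j
                    + \<alpha> * Zh i j + Rh / sqrt E1 * dFpot (Zt i j))
       \<and> R1 - R0 = 1 / (2 * sqrt E1) *
            ip_m Nx Ny hx hy (\<lambda>i j. dFpot (Zt i j)) (\<lambda>i j. Z1 i j - Z0 i j))"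

end

theory Submission
  imports Defs "HOL-Library.Function_Algebras"
begin

(* Summation by parts gives (\<Delta>\<^sub>h f, g)\<^sub>m = - (\<nabla>\<^sub>h f, \<nabla>\<^sub>h g), so the Neumann Laplacian is symmetric and
   negative semidefinite with the constants as kernel.  Hence -\<Delta>\<^sub>h \<eta> = \<phi> has a unique mean-zero
   solution for mean-zero \<phi>, and (\<phi>, g)\<^sub>m = (\<nabla>\<^sub>h \<eta>\<^sub>\<phi>, \<nabla>\<^sub>h g).

   Solvability: eliminating \<Psi>\<^sup>n\<^sup>+\<^sup>1, W and R\<^sup>n\<^sup>+\<^sup>1 leaves one linear equation
   (2/\<Delta>t + \<beta>) d - M \<Delta>t \<Delta>\<^sub>h (A d) = F for the increment d = Z\<^sup>n\<^sup>+\<^sup>1 - Z\<^sup>n, where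
   A d = \<Delta>\<^sub>h\<^sup>2 d / 2 + \<alpha> d / 2 + (g, d)\<^sub>m g / (4 E), with g and E the values of F' and E\<^sub>1\<^sup>h
   at the extrapolated state.  Testing it with A d shows that the operator is
   injective, hence bijective on the finite-dimensional space of grid functions.

   Mass conservation: test the \<Psi>-equation with 1.  Energy: test it with \<eta> of \<Psi>\<^sup>n\<^sup>+\<^sup>1\<^sup>/\<^sup>2 and test W with
   Z\<^sup>n\<^sup>+\<^sup>1 - Z\<^sup>n.  Everything telescopes except the explicitly extrapolated gradient term, whose
   defect, after adding the correction 1/2 |\<nabla>\<^sub>h Z\<^sup>n - \<nabla>\<^sub>h Z\<^sup>n\<^sup>-\<^sup>1|\<^sup>2 of the modified energy,
   is - 1/2 |\<nabla>\<^sub>h (Z\<^sup>n\<^sup>+\<^sup>1 - 2 Z\<^sup>n + Z\<^sup>n\<^sup>-\<^sup>1)|\<^sup>2 \<le> 0. *)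

lemma sum_diff_mult_by_parts:
  fixes a b :: "nat \<Rightarrow> real"
  shows "(\<Sum>i\<in>{1..Suc k}. (a i - a (i - 1)) * b i)
     = a (Suc k) * b (Suc k) - a 0 * b 1 - (\<Sum>i\<in>{1..k}. a i * (b (i + 1) - b i))"
  by (induction k) (simp_all add: algebra_simps)

lemma sum_diff_mult_by_parts_zero_ends:
  fixes a b :: "nat \<Rightarrow> real"
  assumes "N > 0" "a 0 = 0" "a N = 0"
  shows "(\<Sum>i\<in>{1..N}. (a i - a (i - 1)) * b i) = - (\<Sum>i\<in>{1..N - 1}. a i * (b (i + 1) - b i))"
  using assms sum_diff_mult_by_parts[of a b "N - 1"] by simp

lemma double_sum_sq_nonneg:
  fixes f :: grid and c :: real
  assumes "c \<ge> 0"
  shows "0 \<le> (\<Sum>i\<in>A. \<Sum>j\<in>B. c * f i j * f i j)"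
  using assms by (intro sum_nonneg) (simp add: mult.assoc)

lemma double_sum_sq_eq_0D:
  fixes f :: grid and c :: real
  assumes "c > 0" "finite A" "finite B" "(\<Sum>i\<in>A. \<Sum>j\<in>B. c * f i j * f i j) = 0" "i \<in> A" "j \<in> B"
  shows "f i j = 0"
proof -
  have nonneg: "0 \<le> c * f i j * f i j" for i j
    using assms(1) by (simp add: mult.assoc)
  have "\<forall>i\<in>A. (\<Sum>j\<in>B. c * f i j * f i j) = 0"
    using assms(2,4) by (subst sum_nonneg_eq_0_iff[symmetric]) (auto intro: sum_nonneg nonneg)
  then have "(\<Sum>j\<in>B. c * f i j * f i j) = 0"
    using assms(5) by blast
  then show ?thesis
    using assms(1,3,6) nonneg by (auto simp: sum_nonneg_eq_0_iff)
qed

text \<open>The energy error of the extrapolation \<open>(3 b - c) / 2\<close> is the square of the second difference.\<close>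
lemma double_sum_extrapolation_le_0:
  fixes a b c :: grid and k :: real and A B :: "nat set"
  assumes "k \<ge> 0"
  defines "S \<equiv> \<lambda>f g. \<Sum>i\<in>A. \<Sum>j\<in>B. k * f i j * g i j"
  shows "2 * S (\<lambda>i j. (3 * b i j - c i j) / 2) (\<lambda>i j. a i j - b i j) - S a a + S b b
      + S (\<lambda>i j. a i j - b i j) (\<lambda>i j. a i j - b i j) / 2
      - S (\<lambda>i j. b i j - c i j) (\<lambda>i j. b i j - c i j) / 2 \<le> 0"
proof -
  have "2 * S (\<lambda>i j. (3 * b i j - c i j) / 2) (\<lambda>i j. a i j - b i j) - S a a + S b b
      + S (\<lambda>i j. a i j - b i j) (\<lambda>i j. a i j - b i j) / 2
      - S (\<lambda>i j. b i j - c i j) (\<lambda>i j. b i j - c i j) / 2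
      = (\<Sum>i\<in>A. \<Sum>j\<in>B. - (k * (a i j - 2 * b i j + c i j)\<^sup>2) / 2)"
    unfolding S_def
    by (simp add: sum_distrib_left sum_divide_distrib sum.distrib[symmetric] sum_subtractf[symmetric]
        algebra_simps) (intro sum.cong refl; simp add: field_simps power2_eq_square)
  also have "\<dots> \<le> 0"
    using assms(1) by (intro sum_nonpos) simp
  finally show ?thesis .
qed

lemma nat_chain_eq_first:
  assumes "\<And>i. 1 \<le> i \<Longrightarrow> i < n \<Longrightarrow> a (Suc i) = a i" "1 \<le> i" "i \<le> n"
  shows "a i = a 1"
  using assms(2,3) by (induction i) (auto simp: le_Suc_eq assms(1))

lemma ip_m_cong:
  "(\<And>i j. in_grid Nx Ny i j \<Longrightarrow> f i j = f' i j) \<Longrightarrow> (\<And>i j. in_grid Nx Ny i j \<Longrightarrow> g i j = g' i j)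
   \<Longrightarrow> ip_m Nx Ny hx hy f g = ip_m Nx Ny hx hy f' g'"
  unfolding ip_m_def by (intro sum.cong refl) (simp add: in_grid_def)

lemma ip_m_commute: "ip_m Nx Ny hx hy f g = ip_m Nx Ny hx hy g f"
  by (simp add: ip_m_def algebra_simps)

lemma ip_m_lincomb_left:
  "ip_m Nx Ny hx hy (\<lambda>i j. a * f i j + b * g i j) k = a * ip_m Nx Ny hx hy f k + b * ip_m Nx Ny hx hy g k"
  by (simp add: ip_m_def sum.distrib sum_distrib_left algebra_simps)

lemma ip_m_lincomb_right:
  "ip_m Nx Ny hx hy k (\<lambda>i j. a * f i j + b * g i j) = a * ip_m Nx Ny hx hy k f + b * ip_m Nx Ny hx hy k g"
  by (simp add: ip_m_def sum.distrib sum_distrib_left algebra_simps)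

lemma ip_m_add_left:
  "ip_m Nx Ny hx hy (\<lambda>i j. f i j + g i j) k = ip_m Nx Ny hx hy f k + ip_m Nx Ny hx hy g k"
  using ip_m_lincomb_left[of Nx Ny hx hy 1 f 1 g k] by simp

lemma ip_m_scale_left: "ip_m Nx Ny hx hy (\<lambda>i j. a * f i j) k = a * ip_m Nx Ny hx hy f k"
  by (simp add: ip_m_def sum_distrib_left algebra_simps)

lemma ip_m_scale_right: "ip_m Nx Ny hx hy k (\<lambda>i j. a * f i j) = a * ip_m Nx Ny hx hy k f"
  by (simp add: ip_m_def sum_distrib_left algebra_simps)

lemma ip_m_const_one: "ip_m Nx Ny hx hy (\<lambda>_ _. c) (\<lambda>_ _. 1) = hx * hy * real Nx * real Ny * c"
  by (simp add: ip_m_def)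

lemma ip_m_mean_diff:
  "ip_m Nx Ny hx hy (\<lambda>i j. (a i j + b i j) / 2) (\<lambda>i j. a i j - b i j)
   = (ip_m Nx Ny hx hy a a - ip_m Nx Ny hx hy b b) / 2"
  unfolding ip_m_def
  by (simp add: sum_distrib_left sum_subtractf[symmetric] sum_divide_distrib algebra_simps)

lemma dx_lincomb:
  "dx Nx Ny hx (\<lambda>i j. a * f i j + b * g i j) = (\<lambda>i j. a * dx Nx Ny hx f i j + b * dx Nx Ny hx g i j)"
  by (simp add: dx_def ext_def fun_eq_iff add_divide_distrib diff_divide_distrib algebra_simps)

lemma dy_lincomb:
  "dy Nx Ny hy (\<lambda>i j. a * f i j + b * g i j) = (\<lambda>i j. a * dy Nx Ny hy f i j + b * dy Nx Ny hy g i j)"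
  by (simp add: dy_def ext_def fun_eq_iff add_divide_distrib diff_divide_distrib algebra_simps)

lemma lap_lincomb:
  "lap Nx Ny hx hy (\<lambda>i j. a * f i j + b * g i j) = (\<lambda>i j. a * lap Nx Ny hx hy f i j + b * lap Nx Ny hx hy g i j)"
  by (simp add: lap_def dx_lincomb dy_lincomb Dx_def Dy_def fun_eq_iff add_divide_distrib
      diff_divide_distrib algebra_simps)

lemma lap_diff:
  "lap Nx Ny hx hy (\<lambda>i j. f i j - g i j) = (\<lambda>i j. lap Nx Ny hx hy f i j - lap Nx Ny hx hy g i j)"
  using lap_lincomb[of Nx Ny hx hy 1 f "-1" g] by simp

lemma dx_boundary [simp]: "dx Nx Ny hx f 0 j = 0" "dx Nx Ny hx f Nx j = 0"
  by (simp_all add: dx_def ext_def)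

lemma dy_boundary [simp]: "dy Nx Ny hy f i 0 = 0" "dy Nx Ny hy f i Ny = 0"
  by (simp_all add: dy_def ext_def)

section \<open>Injective linear maps of grid functions\<close>

lemma linear_inj_on_span_imp_surj_on:
  fixes s :: "'a::field \<Rightarrow> 'b::ab_group_add \<Rightarrow> 'b"
  assumes vs: "vector_space s" and lin: "Vector_Spaces.linear s s f" and fin: "finite B0"
    and into: "f ` module.span s B0 \<subseteq> module.span s B0" and inj: "inj_on f (module.span s B0)"
  shows "module.span s B0 \<subseteq> f ` module.span s B0"
proof -
  interpret vector_space s by (rule vs)
  interpret lf: Vector_Spaces.linear s s f by (rule lin)
  obtain B where B: "B \<subseteq> span B0" "independent B" "span B0 \<subseteq> span B"
    by (rule basis_exists[of "span B0"]) blast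
  have finB: "finite B"
    using independent_span_bound[OF fin B(2)] B(1) span_span by metis
  have spB: "span B = span B0"
    using B(1,3) span_mono span_span by (metis subset_antisym)
  have injB: "inj_on f (span B)"
    using inj spB by simp
  have indf: "independent (f ` B)"
    using lf.independent_injective_image[OF B(2) injB] .
  have cardf: "card (f ` B) = card B"
    using card_image inj_on_subset[OF injB span_superset] by blast
  have "span B0 \<subseteq> span (f ` B)"
  proof
    fix a assume a: "a \<in> span B0"
    show "a \<in> span (f ` B)"
    proof (rule ccontr)
      assume na: "a \<notin> span (f ` B)"
      have ind: "independent (insert a (f ` B))"
        using independent_insertI[OF na indf] .
      have sub: "insert a (f ` B) \<subseteq> span B"
        using a into B(1) span_superset spB by blast
      have "card (insert a (f ` B)) \<le> card B"
        using independent_span_bound[OF finB ind sub] by simp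
      moreover have "a \<notin> f ` B"
        using na span_superset by blast
      ultimately show False
        using cardf finB by simp
    qed
  qed
  also have "span (f ` B) = f ` span B"
    by (rule lf.span_image)
  finally show ?thesis
    using spB by simp
qed

definition grid_scale :: "real \<Rightarrow> grid \<Rightarrow> grid" where
  "grid_scale c f = (\<lambda>i j. c * f i j)"

lemma vector_space_grid_scale: "vector_space grid_scale"
  by unfold_locales (simp_all add: grid_scale_def plus_fun_def fun_eq_iff algebra_simps)

definition grid_unit :: "nat \<times> nat \<Rightarrow> grid" where
  "grid_unit p = (\<lambda>i j. if (i, j) = p then 1 else 0)"

definition restrict_grid :: "nat \<Rightarrow> nat \<Rightarrow> grid \<Rightarrow> grid" where
  "restrict_grid Nx Ny g i j = (if in_grid Nx Ny i j then g i j else 0)"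

lemma gridfun_restrict_grid [simp]: "gridfun Nx Ny (restrict_grid Nx Ny g)"
  by (simp add: gridfun_def restrict_grid_def)

lemma restrict_grid_eq_iff:
  "restrict_grid Nx Ny f = restrict_grid Nx Ny g \<longleftrightarrow> (\<forall>i j. in_grid Nx Ny i j \<longrightarrow> f i j = g i j)"
  by (auto simp: restrict_grid_def fun_eq_iff)

lemma sum_fun_apply: "(\<Sum>p\<in>P. F p) i j = (\<Sum>p\<in>P. F p i j)" for F :: "'a \<Rightarrow> grid"
  by (induction P rule: infinite_finite_induct) (simp_all add: plus_fun_def)

lemma span_grid_units:
  "module.span grid_scale (grid_unit ` ({1..Nx} \<times> {1..Ny})) = {g. gridfun Nx Ny g}"
proof -
  interpret vector_space grid_scale by (rule vector_space_grid_scale)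
  let ?B = "grid_unit ` ({1..Nx} \<times> {1..Ny})"
  have "subspace {g. gridfun Nx Ny g}"
    unfolding subspace_def gridfun_def by (auto simp: grid_scale_def plus_fun_def)
  moreover have "?B \<subseteq> {g. gridfun Nx Ny g}"
    by (auto simp: gridfun_def grid_unit_def in_grid_def)
  ultimately have "span ?B \<subseteq> {g. gridfun Nx Ny g}"
    using span_minimal by blast
  moreover have "g \<in> span ?B" if g: "gridfun Nx Ny g" for g
  proof -
    have "g = (\<Sum>p\<in>{1..Nx} \<times> {1..Ny}. grid_scale (g (fst p) (snd p)) (grid_unit p))"
    proof (intro ext)
      fix i j
      have "(\<Sum>p\<in>{1..Nx} \<times> {1..Ny}. grid_scale (g (fst p) (snd p)) (grid_unit p)) i j
          = (\<Sum>p\<in>{1..Nx} \<times> {1..Ny}. if p = (i, j) then g i j else 0)"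
        unfolding sum_fun_apply by (intro sum.cong refl) (auto simp: grid_scale_def grid_unit_def)
      also have "\<dots> = g i j"
        using g by (auto simp: sum.delta gridfun_def in_grid_def)
      finally show "g i j = (\<Sum>p\<in>{1..Nx} \<times> {1..Ny}. grid_scale (g (fst p) (snd p)) (grid_unit p)) i j" ..
    qed
    also have "\<dots> \<in> span ?B"
      by (intro span_sum span_scale span_base) auto
    finally show ?thesis .
  qed
  ultimately show ?thesis by blast
qed

lemma gridfun_linear_inj_imp_surj:
  assumes lin: "Vector_Spaces.linear grid_scale grid_scale f"
    and into: "\<And>g. gridfun Nx Ny g \<Longrightarrow> gridfun Nx Ny (f g)"
    and ker: "\<And>g. gridfun Nx Ny g \<Longrightarrow> f g = 0 \<Longrightarrow> g = 0"
    and y: "gridfun Nx Ny y"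
  shows "\<exists>x. gridfun Nx Ny x \<and> f x = y"
proof -
  interpret vector_space grid_scale by (rule vector_space_grid_scale)
  interpret lf: Vector_Spaces.linear grid_scale grid_scale f by (rule lin)
  let ?B = "grid_unit ` ({1..Nx} \<times> {1..Ny})"
  have "inj_on f (span ?B)"
    unfolding lf.inj_on_iff_eq_0[OF subspace_span] using ker span_grid_units by auto
  then have "span ?B \<subseteq> f ` span ?B"
    by (intro linear_inj_on_span_imp_surj_on[OF vector_space_grid_scale lin]) (use into span_grid_units in auto)
  then show ?thesis
    using y span_grid_units by auto
qed

lemma grid_operator_inj_imp_surj:
  fixes \<Phi> :: "grid \<Rightarrow> grid"
  assumes lincomb: "\<And>a b x y. \<Phi> (\<lambda>i j. a * x i j + b * y i j) = (\<lambda>i j. a * \<Phi> x i j + b * \<Phi> y i j)"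
    and inj: "\<And>x. gridfun Nx Ny x \<Longrightarrow> (\<And>i j. in_grid Nx Ny i j \<Longrightarrow> \<Phi> x i j = 0) \<Longrightarrow> x = 0"
  shows "\<exists>x. gridfun Nx Ny x \<and> (\<forall>i j. in_grid Nx Ny i j \<longrightarrow> \<Phi> x i j = y i j)"
proof -
  let ?T = "\<lambda>x. restrict_grid Nx Ny (\<Phi> x)"
  have "\<Phi> (x + y) = \<Phi> x + \<Phi> y" "\<Phi> (grid_scale c x) = grid_scale c (\<Phi> x)" for x y c
    using lincomb[of 1 x 1 y] lincomb[of c x 0 x]
    by (simp_all add: plus_fun_def grid_scale_def)
  then have "Vector_Spaces.linear grid_scale grid_scale ?T"
    unfolding Vector_Spaces.linear_iff
    by (simp add: vector_space_grid_scale fun_eq_iff restrict_grid_def grid_scale_def)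
  moreover have "x = 0" if "gridfun Nx Ny x" "?T x = 0" for x
  proof (rule inj[OF that(1)])
    fix i j assume "in_grid Nx Ny i j"
    then show "\<Phi> x i j = 0"
      using fun_cong[OF fun_cong[OF that(2), of i], of j] by (simp add: restrict_grid_def)
  qed
  ultimately obtain x where "gridfun Nx Ny x" "?T x = restrict_grid Nx Ny y"
    using gridfun_linear_inj_imp_surj[of "?T"] by (metis gridfun_restrict_grid)
  then show ?thesis
    using restrict_grid_eq_iff by blast
qed

section \<open>The Neumann Laplacian\<close>

locale neumann_grid =
  fixes Nx Ny :: nat and hx hy :: real
  assumes Nx_pos: "0 < Nx" and Ny_pos: "0 < Ny" and hx_pos: "0 < hx" and hy_pos: "0 < hy"
begin

abbreviation Lh :: "grid \<Rightarrow> grid" where "Lh \<equiv> lap Nx Ny hx hy"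
abbreviation ipm :: "grid \<Rightarrow> grid \<Rightarrow> real" where "ipm \<equiv> ip_m Nx Ny hx hy"
abbreviation mass :: "grid \<Rightarrow> real" where "mass f \<equiv> ip_m Nx Ny hx hy f (\<lambda>_ _. 1)"

definition grad_ip :: "grid \<Rightarrow> grid \<Rightarrow> real" where
  "grad_ip f g = ip_x Nx Ny hx hy (dx Nx Ny hx f) (dx Nx Ny hx g) + ip_y Nx Ny hx hy (dy Nx Ny hy f) (dy Nx Ny hy g)"

lemma lap_cong:
  assumes "\<And>i j. in_grid Nx Ny i j \<Longrightarrow> f i j = g i j"
  shows "Lh f = Lh g"
proof -
  have "in_grid Nx Ny (min (max i 1) Nx) (min (max j 1) Ny)" for i j
    using Nx_pos Ny_pos by (auto simp: in_grid_def)
  then have "ext Nx Ny f = ext Nx Ny g"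
    using assms by (simp add: ext_def fun_eq_iff)
  then show ?thesis
    by (simp add: lap_def dx_def dy_def Dx_def Dy_def fun_eq_iff)
qed

lemma dx_interior: "i \<in> {1..Nx - 1} \<Longrightarrow> j \<in> {1..Ny} \<Longrightarrow> f (i + 1) j - f i j = hx * dx Nx Ny hx f i j"
  using Nx_pos hx_pos by (auto simp: dx_def ext_def min_def)

lemma dy_interior: "i \<in> {1..Nx} \<Longrightarrow> j \<in> {1..Ny - 1} \<Longrightarrow> f i (j + 1) - f i j = hy * dy Nx Ny hy f i j"
  using Ny_pos hy_pos by (auto simp: dy_def ext_def min_def)

lemma ip_m_Dx_dx: "ipm (Dx hx (dx Nx Ny hx f)) g = - ip_x Nx Ny hx hy (dx Nx Ny hx f) (dx Nx Ny hx g)"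
proof -
  let ?a = "dx Nx Ny hx f"
  have "ipm (Dx hx ?a) g = (\<Sum>j\<in>{1..Ny}. hy * (\<Sum>i\<in>{1..Nx}. (?a i j - ?a (i - 1) j) * g i j))"
    unfolding ip_m_def Dx_def sum_distrib_left using hx_pos
    by (subst sum.swap) (intro sum.cong refl, simp add: field_simps)
  also have "\<dots> = (\<Sum>j\<in>{1..Ny}. - hy * (\<Sum>i\<in>{1..Nx - 1}. ?a i j * (g (i + 1) j - g i j)))"
    by (intro sum.cong refl, subst sum_diff_mult_by_parts_zero_ends[OF Nx_pos]) simp_all
  also have "\<dots> = - ip_x Nx Ny hx hy ?a (dx Nx Ny hx g)"
    unfolding ip_x_def sum_distrib_left sum_negf[symmetric]
    by (subst (2) sum.swap, intro sum.cong refl, subst dx_interior) auto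
  finally show ?thesis .
qed

lemma ip_m_Dy_dy: "ipm (Dy hy (dy Nx Ny hy f)) g = - ip_y Nx Ny hx hy (dy Nx Ny hy f) (dy Nx Ny hy g)"
proof -
  let ?a = "dy Nx Ny hy f"
  have "ipm (Dy hy ?a) g = (\<Sum>i\<in>{1..Nx}. hx * (\<Sum>j\<in>{1..Ny}. (?a i j - ?a i (j - 1)) * g i j))"
    unfolding ip_m_def Dy_def sum_distrib_left using hy_pos
    by (intro sum.cong refl, simp add: field_simps)
  also have "\<dots> = (\<Sum>i\<in>{1..Nx}. - hx * (\<Sum>j\<in>{1..Ny - 1}. ?a i j * (g i (j + 1) - g i j)))"
    by (intro sum.cong refl, subst sum_diff_mult_by_parts_zero_ends[OF Ny_pos]) simp_all
  also have "\<dots> = - ip_y Nx Ny hx hy ?a (dy Nx Ny hy g)"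
    unfolding ip_y_def sum_distrib_left sum_negf[symmetric]
    by (intro sum.cong refl, subst dy_interior) auto
  finally show ?thesis .
qed

lemma ip_m_lap_left: "ipm (Lh f) g = - grad_ip f g"
proof -
  have "Lh f = (\<lambda>i j. 1 * Dx hx (dx Nx Ny hx f) i j + 1 * Dy hy (dy Nx Ny hy f) i j)"
    by (simp add: lap_def fun_eq_iff)
  then show ?thesis
    by (simp only: ip_m_lincomb_left ip_m_Dx_dx ip_m_Dy_dy grad_ip_def)
qed

lemma grad_ip_commute: "grad_ip f g = grad_ip g f"
  by (simp add: grad_ip_def ip_x_def ip_y_def algebra_simps)

lemma ip_m_lap_commute: "ipm (Lh f) g = ipm f (Lh g)"
  by (simp add: ip_m_lap_left ip_m_commute[of _ _ _ _ f] grad_ip_commute)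

lemma mass_lap: "mass (Lh f) = 0"
  by (simp add: ip_m_lap_left grad_ip_def dx_def dy_def ext_def ip_x_def ip_y_def)

lemma ip_m_self_nonneg: "0 \<le> ipm f f"
  unfolding ip_m_def using hx_pos hy_pos by (intro double_sum_sq_nonneg) simp

lemma ip_m_self_eq_0D:
  assumes "ipm f f = 0" "in_grid Nx Ny i j"
  shows "f i j = 0"
proof (rule double_sum_sq_eq_0D)
  show "0 < hx * hy" using hx_pos hy_pos by simp
  show "(\<Sum>i\<in>{1..Nx}. \<Sum>j\<in>{1..Ny}. hx * hy * f i j * f i j) = 0"
    using assms(1) by (simp only: ip_m_def)
qed (use assms(2) in \<open>simp_all add: in_grid_def\<close>)

lemma grad_ip_self_nonneg: "0 \<le> grad_ip f f"
  unfolding grad_ip_def ip_x_def ip_y_def using hx_pos hy_pos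
  by (intro add_nonneg_nonneg double_sum_sq_nonneg) simp_all

lemma grad_ip_self_eq_0D:
  assumes "grad_ip f f = 0"
  shows "i \<in> {1..Nx - 1} \<Longrightarrow> j \<in> {1..Ny} \<Longrightarrow> dx Nx Ny hx f i j = 0"
    and "i \<in> {1..Nx} \<Longrightarrow> j \<in> {1..Ny - 1} \<Longrightarrow> dy Nx Ny hy f i j = 0"
proof -
  have h: "0 < hx * hy"
    using hx_pos hy_pos by simp
  have "0 \<le> ip_x Nx Ny hx hy (dx Nx Ny hx f) (dx Nx Ny hx f)"
       "0 \<le> ip_y Nx Ny hx hy (dy Nx Ny hy f) (dy Nx Ny hy f)"
    unfolding ip_x_def ip_y_def using h by (simp_all add: double_sum_sq_nonneg)
  then have x: "ip_x Nx Ny hx hy (dx Nx Ny hx f) (dx Nx Ny hx f) = 0"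
       and y: "ip_y Nx Ny hx hy (dy Nx Ny hy f) (dy Nx Ny hy f) = 0"
    using assms unfolding grad_ip_def by linarith+
  show "dx Nx Ny hx f i j = 0" if "i \<in> {1..Nx - 1}" "j \<in> {1..Ny}"
    using double_sum_sq_eq_0D[OF h finite_atLeastAtMost finite_atLeastAtMost x[unfolded ip_x_def] that] .
  show "dy Nx Ny hy f i j = 0" if "i \<in> {1..Nx}" "j \<in> {1..Ny - 1}"
    using double_sum_sq_eq_0D[OF h finite_atLeastAtMost finite_atLeastAtMost y[unfolded ip_y_def] that] .
qed

lemma grad_ip_self_eq_0_left:
  assumes "grad_ip f f = 0"
  shows "grad_ip f g = 0"
  unfolding grad_ip_def ip_x_def ip_y_def
  using grad_ip_self_eq_0D[OF assms] by (simp add: sum.neutral)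

text \<open>A grid function with vanishing discrete gradient is constant: walk along rows and columns.\<close>
lemma grad_ip_self_eq_0_const:
  assumes "grad_ip f f = 0" "in_grid Nx Ny i j"
  shows "f i j = f 1 1"
proof -
  have "f i j = f 1 j"
    using assms dx_interior[of _ j f] grad_ip_self_eq_0D(1)[OF assms(1), of _ j]
    by (intro nat_chain_eq_first[where a = "\<lambda>i. f i j" and n = Nx]) (auto simp: in_grid_def)
  also have "\<dots> = f 1 1"
    using assms dy_interior[of 1 _ f] grad_ip_self_eq_0D(2)[OF assms(1), of 1] Nx_pos
    by (intro nat_chain_eq_first[where a = "\<lambda>j. f 1 j" and n = Ny]) (auto simp: in_grid_def)
  finally show ?thesis .
qed

lemma lap_eq_0_const:
  assumes "\<And>i j. in_grid Nx Ny i j \<Longrightarrow> Lh f i j = 0" "in_grid Nx Ny i j"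
  shows "f i j = f 1 1"
proof -
  have "ipm (Lh f) f = ipm (\<lambda>_ _. 0) f"
    using assms(1) by (intro ip_m_cong) simp_all
  then have "- grad_ip f f = 0"
    by (simp only: ip_m_lap_left) (simp add: ip_m_def)
  then show ?thesis
    using grad_ip_self_eq_0_const[OF _ assms(2)] by simp
qed

lemma mass_const_on_grid:
  assumes "\<And>i j. in_grid Nx Ny i j \<Longrightarrow> f i j = c"
  shows "mass f = hx * hy * real Nx * real Ny * c"
proof -
  have "mass f = mass (\<lambda>_ _. c)"
    using assms by (intro ip_m_cong) simp_all
  then show ?thesis
    by (simp add: ip_m_const_one)
qed

lemma lap_eq_0_mass_eq_0:
  assumes "\<And>i j. in_grid Nx Ny i j \<Longrightarrow> Lh d i j = 0" "mass d = 0" "in_grid Nx Ny i j"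
  shows "d i j = 0"
proof -
  have "mass d = hx * hy * real Nx * real Ny * d 1 1"
    using lap_eq_0_const[OF assms(1)] by (intro mass_const_on_grid)
  then show ?thesis
    using assms(2) Nx_pos Ny_pos hx_pos hy_pos lap_eq_0_const[OF assms(1,3)] by simp
qed

lemma poisson_shift_eq_mass:
  assumes "\<And>i j. in_grid Nx Ny i j \<Longrightarrow> - Lh e i j + c = \<phi> i j"
  shows "hx * hy * real Nx * real Ny * c = mass \<phi>"
proof -
  have "mass \<phi> = mass (\<lambda>i j. (- 1) * Lh e i j + c * 1)"
    using assms by (intro ip_m_cong) simp_all
  also have "\<dots> = hx * hy * real Nx * real Ny * c"
    by (simp only: ip_m_lincomb_left mass_lap) (simp add: ip_m_const_one)
  finally show ?thesis ..
qed

section \<open>The discrete \<open>H\<^sup>-\<^sup>1\<close> inner product\<close>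

lemma neumann_poisson_unique:
  assumes "gridfun Nx Ny e1" "mass e1 = 0" "\<And>i j. in_grid Nx Ny i j \<Longrightarrow> - Lh e1 i j = \<phi> i j"
    and "gridfun Nx Ny e2" "mass e2 = 0" "\<And>i j. in_grid Nx Ny i j \<Longrightarrow> - Lh e2 i j = \<phi> i j"
  shows "e1 = e2"
proof -
  let ?d = "\<lambda>i j. e1 i j - e2 i j"
  have "?d i j = 0" if "in_grid Nx Ny i j" for i j
  proof (rule lap_eq_0_mass_eq_0[OF _ _ that])
    show "Lh ?d i j = 0" if "in_grid Nx Ny i j" for i j
      using assms(3,6)[OF that] by (simp add: lap_diff)
    show "mass ?d = 0"
      using ip_m_lincomb_left[of Nx Ny hx hy 1 e1 "-1" e2] assms(2,5) by simp
  qed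
  then show ?thesis
    using assms(1,4) unfolding gridfun_def fun_eq_iff by (metis eq_iff_diff_eq_0)
qed

lemma neumann_poisson_solvable:
  assumes "mass \<phi> = 0"
  shows "\<exists>e. gridfun Nx Ny e \<and> mass e = 0 \<and> (\<forall>i j. in_grid Nx Ny i j \<longrightarrow> - Lh e i j = \<phi> i j)"
proof -
  let ?\<Phi> = "\<lambda>e i j. - Lh e i j + mass e"
  have "\<exists>e. gridfun Nx Ny e \<and> (\<forall>i j. in_grid Nx Ny i j \<longrightarrow> ?\<Phi> e i j = \<phi> i j)"
  proof (rule grid_operator_inj_imp_surj)
    show "?\<Phi> (\<lambda>i j. a * x i j + b * y i j) = (\<lambda>i j. a * ?\<Phi> x i j + b * ?\<Phi> y i j)" for a b x y
      by (simp add: lap_lincomb ip_m_lincomb_left fun_eq_iff algebra_simps)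
  next
    fix x assume x: "gridfun Nx Ny x" and "\<And>i j. in_grid Nx Ny i j \<Longrightarrow> ?\<Phi> x i j = 0"
    then have eq: "- Lh x i j + mass x = 0" if "in_grid Nx Ny i j" for i j
      using that by blast
    have "mass x = 0"
      using poisson_shift_eq_mass[OF eq] Nx_pos Ny_pos hx_pos hy_pos by (simp add: ip_m_def)
    then have "x i j = 0" if "in_grid Nx Ny i j" for i j
      using eq lap_eq_0_mass_eq_0[OF _ _ that] by simp
    then show "x = 0"
      using x by (auto simp: gridfun_def fun_eq_iff)
  qed
  then obtain e where e: "gridfun Nx Ny e" "\<And>i j. in_grid Nx Ny i j \<Longrightarrow> - Lh e i j + mass e = \<phi> i j"
    by blast
  have "mass e = 0"
    using poisson_shift_eq_mass[OF e(2)] assms Nx_pos Ny_pos hx_pos hy_pos by simp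
  then show ?thesis
    using e by auto
qed

lemma eta_solves:
  assumes "mass \<phi> = 0"
  shows "gridfun Nx Ny (eta Nx Ny hx hy \<phi>)" "mass (eta Nx Ny hx hy \<phi>) = 0"
    "\<And>i j. in_grid Nx Ny i j \<Longrightarrow> - Lh (eta Nx Ny hx hy \<phi>) i j = \<phi> i j"
proof -
  have "\<exists>!e. gridfun Nx Ny e \<and> mass e = 0 \<and> (\<forall>i j. in_grid Nx Ny i j \<longrightarrow> - Lh e i j = \<phi> i j)"
    using neumann_poisson_solvable[OF assms] neumann_poisson_unique by blast
  then have "gridfun Nx Ny (eta Nx Ny hx hy \<phi>) \<and> mass (eta Nx Ny hx hy \<phi>) = 0
      \<and> (\<forall>i j. in_grid Nx Ny i j \<longrightarrow> - Lh (eta Nx Ny hx hy \<phi>) i j = \<phi> i j)"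
    unfolding eta_def by (rule theI')
  then show "gridfun Nx Ny (eta Nx Ny hx hy \<phi>)" "mass (eta Nx Ny hx hy \<phi>) = 0"
    "\<And>i j. in_grid Nx Ny i j \<Longrightarrow> - Lh (eta Nx Ny hx hy \<phi>) i j = \<phi> i j"
    by auto
qed

lemma eta_eqI:
  assumes "gridfun Nx Ny e" "mass e = 0" "\<And>i j. in_grid Nx Ny i j \<Longrightarrow> - Lh e i j = \<phi> i j"
  shows "eta Nx Ny hx hy \<phi> = e"
  unfolding eta_def by (rule the_equality) (use assms neumann_poisson_unique in blast)+

lemma ip_m_eq_grad_ip_eta:
  assumes "mass \<phi> = 0"
  shows "ipm \<phi> g = grad_ip (eta Nx Ny hx hy \<phi>) g"
proof -
  have "ipm \<phi> g = ipm (\<lambda>i j. (- 1) * Lh (eta Nx Ny hx hy \<phi>) i j) g"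
    using eta_solves(3)[OF assms] by (intro ip_m_cong) simp_all
  also have "\<dots> = grad_ip (eta Nx Ny hx hy \<phi>) g"
    by (simp only: ip_m_scale_left ip_m_lap_left)
  finally show ?thesis .
qed

lemma norm_neg1_sq: "(norm_neg1 Nx Ny hx hy \<phi>)\<^sup>2 = grad_ip (eta Nx Ny hx hy \<phi>) (eta Nx Ny hx hy \<phi>)"
  using grad_ip_self_nonneg by (simp add: norm_neg1_def ip_neg1_def grad_ip_def)

lemma eta_lincomb:
  assumes "mass \<phi> = 0" "mass \<psi> = 0"
  shows "eta Nx Ny hx hy (\<lambda>i j. a * \<phi> i j + b * \<psi> i j)
    = (\<lambda>i j. a * eta Nx Ny hx hy \<phi> i j + b * eta Nx Ny hx hy \<psi> i j)"
proof (rule eta_eqI)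
  show "gridfun Nx Ny (\<lambda>i j. a * eta Nx Ny hx hy \<phi> i j + b * eta Nx Ny hx hy \<psi> i j)"
    using eta_solves(1)[OF assms(1)] eta_solves(1)[OF assms(2)] by (simp add: gridfun_def)
  show "mass (\<lambda>i j. a * eta Nx Ny hx hy \<phi> i j + b * eta Nx Ny hx hy \<psi> i j) = 0"
    unfolding ip_m_lincomb_left eta_solves(2)[OF assms(1)] eta_solves(2)[OF assms(2)] by simp
  show "- Lh (\<lambda>i j. a * eta Nx Ny hx hy \<phi> i j + b * eta Nx Ny hx hy \<psi> i j) i j = a * \<phi> i j + b * \<psi> i j"
    if "in_grid Nx Ny i j" for i j
    unfolding lap_lincomb eta_solves(3)[OF assms(1) that, symmetric] eta_solves(3)[OF assms(2) that, symmetric]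
    by (simp add: algebra_simps)
qed

section \<open>Mass conservation and energy dissipation\<close>

lemma extrapolated_gradient_le:
  "2 * grad_ip (\<lambda>i j. (3 * Z0 i j - Zm i j) / 2) (\<lambda>i j. Z1 i j - Z0 i j)
     - grad_norm2 Nx Ny hx hy Z1 + grad_norm2 Nx Ny hx hy Z0
     + 1/2 * grad_diff_norm2 Nx Ny hx hy Z1 Z0 - 1/2 * grad_diff_norm2 Nx Ny hx hy Z0 Zm \<le> 0"
proof -
  have k: "0 \<le> hx * hy"
    using hx_pos hy_pos by simp
  have lin: "dx Nx Ny hx (\<lambda>i j. (3 * Z0 i j - Zm i j) / 2) = (\<lambda>i j. (3 * dx Nx Ny hx Z0 i j - dx Nx Ny hx Zm i j) / 2)"
       "dy Nx Ny hy (\<lambda>i j. (3 * Z0 i j - Zm i j) / 2) = (\<lambda>i j. (3 * dy Nx Ny hy Z0 i j - dy Nx Ny hy Zm i j) / 2)"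
    using dx_lincomb[of Nx Ny hx "3/2" Z0 "-1/2" Zm] dy_lincomb[of Nx Ny hy "3/2" Z0 "-1/2" Zm]
    by (simp_all add: diff_divide_distrib)
  have diff: "dx Nx Ny hx (\<lambda>i j. Z1 i j - Z0 i j) = (\<lambda>i j. dx Nx Ny hx Z1 i j - dx Nx Ny hx Z0 i j)"
       "dy Nx Ny hy (\<lambda>i j. Z1 i j - Z0 i j) = (\<lambda>i j. dy Nx Ny hy Z1 i j - dy Nx Ny hy Z0 i j)"
    using dx_lincomb[of Nx Ny hx 1 Z1 "-1" Z0] dy_lincomb[of Nx Ny hy 1 Z1 "-1" Z0] by simp_all
  let ?S = "ip_x Nx Ny hx hy" and ?T = "ip_y Nx Ny hx hy"
  let ?a = "dx Nx Ny hx Z1" and ?b = "dx Nx Ny hx Z0" and ?c = "dx Nx Ny hx Zm"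
  let ?a' = "dy Nx Ny hy Z1" and ?b' = "dy Nx Ny hy Z0" and ?c' = "dy Nx Ny hy Zm"
  have "2 * ?S (\<lambda>i j. (3 * ?b i j - ?c i j) / 2) (\<lambda>i j. ?a i j - ?b i j) - ?S ?a ?a + ?S ?b ?b
      + ?S (\<lambda>i j. ?a i j - ?b i j) (\<lambda>i j. ?a i j - ?b i j) / 2
      - ?S (\<lambda>i j. ?b i j - ?c i j) (\<lambda>i j. ?b i j - ?c i j) / 2 \<le> 0"
    unfolding ip_x_def by (rule double_sum_extrapolation_le_0[OF k])
  moreover have "2 * ?T (\<lambda>i j. (3 * ?b' i j - ?c' i j) / 2) (\<lambda>i j. ?a' i j - ?b' i j) - ?T ?a' ?a' + ?T ?b' ?b'
      + ?T (\<lambda>i j. ?a' i j - ?b' i j) (\<lambda>i j. ?a' i j - ?b' i j) / 2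
      - ?T (\<lambda>i j. ?b' i j - ?c' i j) (\<lambda>i j. ?b' i j - ?c' i j) / 2 \<le> 0"
    unfolding ip_y_def by (rule double_sum_extrapolation_le_0[OF k])
  ultimately show ?thesis
    unfolding grad_ip_def grad_norm2_def grad_diff_norm2_def lin diff by argo
qed

lemma mass_conservation:
  assumes dt: "0 < dt" and \<beta>: "0 \<le> \<beta>" and mass0: "mass Psi0 = 0"
    and psi: "\<And>i j. in_grid Nx Ny i j \<Longrightarrow>
      Psi1 i j - Psi0 i j + \<beta> * dt * ((Psi1 i j + Psi0 i j) / 2) = M * dt * Lh W i j"
    and z: "\<And>i j. in_grid Nx Ny i j \<Longrightarrow> dt * ((Psi1 i j + Psi0 i j) / 2) = Z1 i j - Z0 i j"
  shows "mass Psi1 = 0" "mass Z1 = mass Z0"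
proof -
  have psi': "(1 + \<beta> * dt / 2) * Psi1 i j + (\<beta> * dt / 2 - 1) * Psi0 i j = (M * dt) * Lh W i j"
    if "in_grid Nx Ny i j" for i j
    using psi[OF that] by (simp add: field_simps)
  have z': "1 * Z1 i j + (- 1) * Z0 i j = (dt / 2) * Psi1 i j + (dt / 2) * Psi0 i j"
    if "in_grid Nx Ny i j" for i j
    using z[OF that] by (simp add: field_simps)
  have "(1 + \<beta> * dt / 2) * mass Psi1 + (\<beta> * dt / 2 - 1) * mass Psi0
      = mass (\<lambda>i j. (1 + \<beta> * dt / 2) * Psi1 i j + (\<beta> * dt / 2 - 1) * Psi0 i j)"
    by (rule ip_m_lincomb_left[symmetric])
  also have "\<dots> = mass (\<lambda>i j. (M * dt) * Lh W i j)"
    by (rule ip_m_cong) (simp_all only: psi')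
  also have "\<dots> = 0"
    by (simp add: ip_m_scale_left mass_lap)
  moreover have "0 \<le> \<beta> * dt / 2"
    using dt \<beta> by simp
  ultimately show mass1: "mass Psi1 = 0"
    using mass0 by simp
  have "mass Z1 - mass Z0 = mass (\<lambda>i j. 1 * Z1 i j + (- 1) * Z0 i j)"
    by (simp only: ip_m_lincomb_left)
  also have "\<dots> = mass (\<lambda>i j. (dt / 2) * Psi1 i j + (dt / 2) * Psi0 i j)"
    by (rule ip_m_cong) (simp_all only: z')
  also have "\<dots> = 0"
    by (simp only: ip_m_lincomb_left mass0 mass1)
  finally show "mass Z1 = mass Z0"
    by simp
qed

text \<open>Test the \<open>\<Psi>\<close>-equation against \<open>\<eta>\<close> of the midpoint \<open>\<Psi>\<^sup>n\<^sup>+\<^sup>1\<^sup>/\<^sup>2\<close>.\<close>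
lemma norm_neg1_step_identity:
  assumes mass0: "mass Psi0 = 0" and mass1: "mass Psi1 = 0"
    and psi: "\<And>i j. in_grid Nx Ny i j \<Longrightarrow>
      Psi1 i j - Psi0 i j + \<beta> * dt * ((Psi1 i j + Psi0 i j) / 2) = M * dt * Lh W i j"
  defines "Ph \<equiv> \<lambda>i j. (Psi1 i j + Psi0 i j) / 2"
  shows "(norm_neg1 Nx Ny hx hy Psi1)\<^sup>2 - (norm_neg1 Nx Ny hx hy Psi0)\<^sup>2
      + 2 * \<beta> * dt * (norm_neg1 Nx Ny hx hy Ph)\<^sup>2 = - 2 * M * dt * ipm W Ph"
proof -
  define e0 where "e0 = eta Nx Ny hx hy Psi0"
  define e1 where "e1 = eta Nx Ny hx hy Psi1"
  define eh where "eh = (\<lambda>i j. (1/2) * e1 i j + (1/2) * e0 i j)"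
  have Ph_lincomb: "Ph = (\<lambda>i j. (1/2) * Psi1 i j + (1/2) * Psi0 i j)"
    by (simp add: Ph_def fun_eq_iff add_divide_distrib)
  have massh: "mass Ph = 0"
    unfolding Ph_lincomb ip_m_lincomb_left mass0 mass1 by simp
  have eh: "eta Nx Ny hx hy Ph = eh"
    unfolding Ph_lincomb eta_lincomb[OF mass1 mass0] eh_def e0_def e1_def ..
  have "ipm Psi1 eh - ipm Psi0 eh + \<beta> * dt * ipm Ph eh
      = ipm (\<lambda>i j. 1 * (1 * Psi1 i j + (- 1) * Psi0 i j) + (\<beta> * dt) * Ph i j) eh"
    by (simp only: ip_m_lincomb_left) simp
  also have "\<dots> = ipm (\<lambda>i j. (M * dt) * Lh W i j) eh"
    using psi by (intro ip_m_cong) (simp_all add: Ph_def)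
  also have "\<dots> = M * dt * ipm W (Lh eh)"
    by (simp only: ip_m_scale_left ip_m_lap_commute)
  finally have balance: "ipm Psi1 eh - ipm Psi0 eh + \<beta> * dt * ipm Ph eh = M * dt * ipm W (Lh eh)" .
  have "ipm W (Lh eh) = ipm W (\<lambda>i j. (- 1) * Ph i j)"
    using eta_solves(3)[OF massh] unfolding eh by (intro ip_m_cong) (simp_all add: minus_equation_iff)
  also have "\<dots> = - ipm W Ph"
    by (simp only: ip_m_scale_right)
  finally have lap_eh: "ipm W (Lh eh) = - ipm W Ph" .
  have "ipm Psi1 eh = (1/2) * grad_ip e1 e1 + (1/2) * grad_ip e1 e0"
       "ipm Psi0 eh = (1/2) * grad_ip e0 e1 + (1/2) * grad_ip e0 e0"
    unfolding eh_def ip_m_lincomb_right ip_m_eq_grad_ip_eta[OF mass0] ip_m_eq_grad_ip_eta[OF mass1]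
    by (simp_all only: e0_def e1_def)
  moreover have "ipm Ph eh = grad_ip eh eh"
    using ip_m_eq_grad_ip_eta[OF massh] unfolding eh .
  ultimately have "(norm_neg1 Nx Ny hx hy Psi1)\<^sup>2 - (norm_neg1 Nx Ny hx hy Psi0)\<^sup>2
      + 2 * \<beta> * dt * (norm_neg1 Nx Ny hx hy Ph)\<^sup>2
      = 2 * (ipm Psi1 eh - ipm Psi0 eh + \<beta> * dt * ipm Ph eh)"
    unfolding norm_neg1_sq eh e0_def[symmetric] e1_def[symmetric] grad_ip_commute[of e0 e1]
    by simp
  then show ?thesis
    unfolding balance lap_eh by simp
qed

lemma W_increment_identity:
  assumes E: "0 < E"
    and W: "\<And>i j. in_grid Nx Ny i j \<Longrightarrow> W i j = Lh (Lh (\<lambda>i j. (Z1 i j + Z0 i j) / 2)) i j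
      + 2 * Lh Zt i j + \<alpha> * ((Z1 i j + Z0 i j) / 2) + (R1 + R0) / 2 / sqrt E * g i j"
    and R: "R1 - R0 = 1 / (2 * sqrt E) * ipm g (\<lambda>i j. Z1 i j - Z0 i j)"
  defines "u \<equiv> \<lambda>i j. Z1 i j - Z0 i j"
  shows "ipm W u = (norm_m2 Nx Ny hx hy (Lh Z1) - norm_m2 Nx Ny hx hy (Lh Z0)) / 2
      - 2 * grad_ip Zt u + \<alpha> * (norm_m2 Nx Ny hx hy Z1 - norm_m2 Nx Ny hx hy Z0) / 2 + R1\<^sup>2 - R0\<^sup>2"
proof -
  let ?Zh = "\<lambda>i j. (Z1 i j + Z0 i j) / 2"
  have lap_Zh: "Lh ?Zh = (\<lambda>i j. (Lh Z1 i j + Lh Z0 i j) / 2)"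
    using lap_lincomb[of Nx Ny hx hy "1/2" Z1 "1/2" Z0] by (simp add: add_divide_distrib)
  have "ipm W u = ipm (\<lambda>i j. Lh (Lh ?Zh) i j + 2 * Lh Zt i j + \<alpha> * ?Zh i j + (R1 + R0) / 2 / sqrt E * g i j) u"
    using W by (intro ip_m_cong) simp_all
  also have "\<dots> = ipm (Lh ?Zh) (Lh u) + 2 * ipm (Lh Zt) u + \<alpha> * ipm ?Zh u + (R1 + R0) / 2 / sqrt E * ipm g u"
    by (simp only: ip_m_add_left ip_m_scale_left ip_m_lap_commute)
  also have "ipm (Lh ?Zh) (Lh u) = (norm_m2 Nx Ny hx hy (Lh Z1) - norm_m2 Nx Ny hx hy (Lh Z0)) / 2"
    unfolding lap_Zh u_def lap_diff norm_m2_def by (rule ip_m_mean_diff)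
  also have "ipm ?Zh u = (norm_m2 Nx Ny hx hy Z1 - norm_m2 Nx Ny hx hy Z0) / 2"
    unfolding u_def norm_m2_def by (rule ip_m_mean_diff)
  also have "(R1 + R0) / 2 / sqrt E * ipm g u = R1\<^sup>2 - R0\<^sup>2"
    using R E unfolding u_def by (simp add: field_simps power2_eq_square)
  finally show ?thesis
    by (simp add: ip_m_lap_left)
qed

lemma scheme_energy_step:
  assumes M: "0 < M" and \<beta>: "0 \<le> \<beta>" and dt: "0 < dt"
    and E: "0 < E1h Nx Ny hx hy (\<lambda>i j. (3 * Z0 i j - Zm i j) / 2)"
    and sch: "scheme Nx Ny hx hy M \<beta> \<alpha> dt Zm Z0 Psi0 R0 Z1 Psi1 W R1"
    and mass0: "mass Psi0 = 0"
  defines "Ph \<equiv> \<lambda>i j. (Psi1 i j + Psi0 i j) / 2"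
  shows "mass Psi1 = 0" "mass Z1 = mass Z0"
    "Ed_tilde Nx Ny hx hy \<alpha> M Z1 Z0 R1 Psi1 - Ed_tilde Nx Ny hx hy \<alpha> M Z0 Zm R0 Psi0
       \<le> - (\<beta> / M) * dt * (norm_neg1 Nx Ny hx hy Ph)\<^sup>2"
proof -
  let ?Zt = "\<lambda>i j. (3 * Z0 i j - Zm i j) / 2" and ?u = "\<lambda>i j. Z1 i j - Z0 i j"
  note cells = sch[unfolded scheme_def Let_def]
  have psi: "\<And>i j. in_grid Nx Ny i j \<Longrightarrow>
      Psi1 i j - Psi0 i j + \<beta> * dt * ((Psi1 i j + Psi0 i j) / 2) = M * dt * Lh W i j"
    and z: "\<And>i j. in_grid Nx Ny i j \<Longrightarrow> dt * ((Psi1 i j + Psi0 i j) / 2) = Z1 i j - Z0 i j"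
    using cells by blast+
  show mass1: "mass Psi1 = 0" and "mass Z1 = mass Z0"
    using mass_conservation[OF dt \<beta> mass0 psi z] by blast+
  have neg1: "(norm_neg1 Nx Ny hx hy Psi1)\<^sup>2 - (norm_neg1 Nx Ny hx hy Psi0)\<^sup>2
      + 2 * \<beta> * dt * (norm_neg1 Nx Ny hx hy Ph)\<^sup>2 = - 2 * M * dt * ipm W Ph"
    unfolding Ph_def by (rule norm_neg1_step_identity[OF mass0 mass1 psi])
  have "ipm W ?u = ipm W (\<lambda>i j. dt * Ph i j)"
    using z by (intro ip_m_cong) (simp_all add: Ph_def)
  then have W_Ph: "ipm W ?u = dt * ipm W Ph"
    by (simp only: ip_m_scale_right)
  have W_u: "ipm W ?u = (norm_m2 Nx Ny hx hy (Lh Z1) - norm_m2 Nx Ny hx hy (Lh Z0)) / 2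
      - 2 * grad_ip ?Zt ?u + \<alpha> * (norm_m2 Nx Ny hx hy Z1 - norm_m2 Nx Ny hx hy Z0) / 2 + R1\<^sup>2 - R0\<^sup>2"
    using cells by (intro W_increment_identity[OF E]) blast+
  have neg1_diff: "(norm_neg1 Nx Ny hx hy Psi1)\<^sup>2 - (norm_neg1 Nx Ny hx hy Psi0)\<^sup>2
      = - 2 * M * dt * ipm W Ph - 2 * \<beta> * dt * (norm_neg1 Nx Ny hx hy Ph)\<^sup>2"
    using neg1 by linarith
  have "1 / (2 * M) * (norm_neg1 Nx Ny hx hy Psi1)\<^sup>2 - 1 / (2 * M) * (norm_neg1 Nx Ny hx hy Psi0)\<^sup>2
      = - ipm W ?u + - (\<beta> / M) * dt * (norm_neg1 Nx Ny hx hy Ph)\<^sup>2"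
    unfolding right_diff_distrib[symmetric] neg1_diff W_Ph using M by (simp add: field_simps)
  moreover have "\<alpha> / 2 * norm_m2 Nx Ny hx hy Z1 - \<alpha> / 2 * norm_m2 Nx Ny hx hy Z0
      = \<alpha> * (norm_m2 Nx Ny hx hy Z1 - norm_m2 Nx Ny hx hy Z0) / 2"
    by (simp add: algebra_simps)
  ultimately show "Ed_tilde Nx Ny hx hy \<alpha> M Z1 Z0 R1 Psi1 - Ed_tilde Nx Ny hx hy \<alpha> M Z0 Zm R0 Psi0
       \<le> - (\<beta> / M) * dt * (norm_neg1 Nx Ny hx hy Ph)\<^sup>2"
    using W_u extrapolated_gradient_le[of Z0 Zm Z1]
    unfolding Ed_tilde_def Ed_def by argo
qed

end

section \<open>Unique solvability\<close>

text \<open>After eliminating \<open>R\<^sup>n\<^sup>+\<^sup>1\<close>, \<open>W\<^sup>n\<^sup>+\<^sup>1\<^sup>/\<^sup>2\<close> is \<open>W_response d\<close> for the increment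
  \<open>d = Z\<^sup>n\<^sup>+\<^sup>1 - Z\<^sup>n\<close> plus terms independent of \<open>d\<close>; \<open>g\<close> is \<open>F'\<close> and \<open>E\<close> is \<open>E\<^sub>1\<^sup>h\<close>
  at the extrapolated state.\<close>
definition W_response :: "nat \<Rightarrow> nat \<Rightarrow> real \<Rightarrow> real \<Rightarrow> real \<Rightarrow> real \<Rightarrow> grid \<Rightarrow> grid \<Rightarrow> grid" where
  "W_response Nx Ny hx hy \<alpha> E g d = (\<lambda>i j. lap Nx Ny hx hy (lap Nx Ny hx hy d) i j / 2 + \<alpha> / 2 * d i j
     + ip_m Nx Ny hx hy g d / (4 * E) * g i j)"

lemma W_response_lincomb:
  "W_response Nx Ny hx hy \<alpha> E g (\<lambda>i j. a * f i j + b * h i j)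
   = (\<lambda>i j. a * W_response Nx Ny hx hy \<alpha> E g f i j + b * W_response Nx Ny hx hy \<alpha> E g h i j)"
  by (simp add: W_response_def lap_lincomb ip_m_lincomb_right fun_eq_iff add_divide_distrib algebra_simps)

context neumann_grid
begin

lemma W_response_cong:
  assumes "\<And>i j. in_grid Nx Ny i j \<Longrightarrow> d i j = d' i j" "in_grid Nx Ny i j"
  shows "W_response Nx Ny hx hy \<alpha> E g d i j = W_response Nx Ny hx hy \<alpha> E g d' i j"
proof -
  have "Lh d = Lh d'" "ipm g d = ipm g d'"
    using assms(1) by (auto intro: lap_cong ip_m_cong)
  then show ?thesis
    using assms by (simp add: W_response_def)
qed

text \<open>Testing with \<open>A = W_response d\<close> gives \<open>c (d, A) = - K |\<nabla>\<^sub>h A|\<^sup>2\<close>, where \<open>(d, A) \<ge> 0\<close>.\<close>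
lemma W_response_increment_inj:
  assumes c: "0 < c" and K: "0 < K" and \<alpha>: "0 \<le> \<alpha>" and E: "0 < E" and d: "gridfun Nx Ny d"
    and eq: "\<And>i j. in_grid Nx Ny i j \<Longrightarrow> c * d i j = K * Lh (W_response Nx Ny hx hy \<alpha> E g d) i j"
  shows "d = 0"
proof -
  define A where "A = W_response Nx Ny hx hy \<alpha> E g d"
  have "ipm d A = ipm d (\<lambda>i j. (1/2) * Lh (Lh d) i j + 1 * (\<alpha> / 2 * d i j + ipm g d / (4 * E) * g i j))"
    unfolding A_def W_response_def by (simp add: algebra_simps)
  also have "\<dots> = 1/2 * ipm (Lh d) (Lh d) + (\<alpha>/2 * ipm d d + (ipm g d)\<^sup>2 / (4 * E))"
    by (simp only: ip_m_lincomb_right ip_m_lap_commute[symmetric] ip_m_commute[of _ _ _ _ d g])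
      (simp add: power2_eq_square)
  finally have "0 \<le> ipm d A"
    using \<alpha> E ip_m_self_nonneg by (simp add: add_nonneg_nonneg)
  then have dA: "0 \<le> c * ipm d A"
    using c by simp
  have cdA: "c * ipm d A = - K * grad_ip A A"
  proof -
    have "c * ipm d A = ipm (\<lambda>i j. K * Lh A i j) A"
      unfolding ip_m_scale_left[symmetric] using eq by (intro ip_m_cong) (simp_all add: A_def)
    then show ?thesis
      by (simp add: ip_m_scale_left ip_m_lap_left)
  qed
  have "0 \<le> K * grad_ip A A"
    using K grad_ip_self_nonneg[of A] by simp
  then have "grad_ip A A = 0"
    using dA cdA K by simp
  then have "ipm (Lh A) (Lh A) = 0"
    by (simp add: ip_m_lap_left grad_ip_self_eq_0_left)
  then have "d i j = 0" if "in_grid Nx Ny i j" for i j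
    using eq[OF that] ip_m_self_eq_0D[OF _ that, of "Lh A"] c by (simp add: A_def)
  then show ?thesis
    using d by (auto simp: gridfun_def fun_eq_iff)
qed

lemma increment_equation_unique_solvable:
  assumes c: "0 < c" and K: "0 < K" and \<alpha>: "0 \<le> \<alpha>" and E: "0 < E"
  shows "\<exists>!d. gridfun Nx Ny d \<and>
    (\<forall>i j. in_grid Nx Ny i j \<longrightarrow> c * d i j - K * Lh (W_response Nx Ny hx hy \<alpha> E g d) i j = F i j)"
proof -
  let ?\<Phi> = "\<lambda>d i j. c * d i j - K * Lh (W_response Nx Ny hx hy \<alpha> E g d) i j"
  have lincomb: "?\<Phi> (\<lambda>i j. a * x i j + b * y i j) = (\<lambda>i j. a * ?\<Phi> x i j + b * ?\<Phi> y i j)" for a b x y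
    by (simp add: W_response_lincomb lap_lincomb fun_eq_iff algebra_simps)
  have inj: "x = 0" if "gridfun Nx Ny x" "\<And>i j. in_grid Nx Ny i j \<Longrightarrow> ?\<Phi> x i j = 0" for x
    by (rule W_response_increment_inj[OF c K \<alpha> E that(1), of g]) (use that(2) in simp)
  show ?thesis
  proof (rule ex_ex1I)
    show "\<exists>d. gridfun Nx Ny d \<and> (\<forall>i j. in_grid Nx Ny i j \<longrightarrow> ?\<Phi> d i j = F i j)"
      by (rule grid_operator_inj_imp_surj[where \<Phi> = ?\<Phi>, OF lincomb inj])
  next
    fix x y
    assume x: "gridfun Nx Ny x \<and> (\<forall>i j. in_grid Nx Ny i j \<longrightarrow> ?\<Phi> x i j = F i j)"
      and y: "gridfun Nx Ny y \<and> (\<forall>i j. in_grid Nx Ny i j \<longrightarrow> ?\<Phi> y i j = F i j)"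
    have "(\<lambda>i j. 1 * x i j + (- 1) * y i j) = 0"
    proof (rule inj)
      show "gridfun Nx Ny (\<lambda>i j. 1 * x i j + (- 1) * y i j)"
        using x y by (simp add: gridfun_def)
      fix i j assume "in_grid Nx Ny i j"
      then have "?\<Phi> x i j = F i j" "?\<Phi> y i j = F i j"
        using x y by blast+
      then show "?\<Phi> (\<lambda>i j. 1 * x i j + (- 1) * y i j) i j = 0"
        using fun_cong[OF fun_cong[OF lincomb[of 1 x "- 1" y], of i], of j] by simp
    qed
    then show "x = y"
      by (simp add: fun_eq_iff)
  qed
qed

lemma W_cell_iff_response:
  assumes V0_def: "V0 = (\<lambda>i j. Lh (Lh Z0) i j + 2 * Lh Zt i j + \<alpha> * Z0 i j + R0 / sqrt E * g i j)"
    and E: "0 < E"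
    and R: "R1 = R0 + ipm g (\<lambda>i j. Z1 i j - Z0 i j) / (2 * sqrt E)"
  shows "W i j = Lh (Lh (\<lambda>i j. (Z1 i j + Z0 i j) / 2)) i j + 2 * Lh Zt i j + \<alpha> * ((Z1 i j + Z0 i j) / 2)
      + (R1 + R0) / 2 / sqrt E * g i j
    \<longleftrightarrow> W i j = V0 i j + W_response Nx Ny hx hy \<alpha> E g (\<lambda>i j. Z1 i j - Z0 i j) i j"
proof -
  let ?d = "\<lambda>i j. Z1 i j - Z0 i j"
  have "(\<lambda>i j. (Z1 i j + Z0 i j) / 2) = (\<lambda>i j. 1/2 * ?d i j + 1 * Z0 i j)"
    by (simp add: fun_eq_iff field_simps)
  then have lap_Zh: "Lh (Lh (\<lambda>i j. (Z1 i j + Z0 i j) / 2)) = (\<lambda>i j. 1/2 * Lh (Lh ?d) i j + 1 * Lh (Lh Z0) i j)"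
    by (simp only: lap_lincomb)
  have "\<And>s :: real. 0 < s \<Longrightarrow>
      (R0 + ipm g ?d / (2 * s) + R0) / 2 / s = R0 / s + ipm g ?d / (4 * (s * s))"
    by (simp add: field_simps)
  then have "(R1 + R0) / 2 / sqrt E = R0 / sqrt E + ipm g ?d / (4 * (sqrt E * sqrt E))"
    unfolding R using E by simp
  then have "(R1 + R0) / 2 / sqrt E = R0 / sqrt E + ipm g ?d / (4 * E)"
    using E by simp
  then show ?thesis
    unfolding lap_Zh V0_def W_response_def by (simp add: field_simps)
qed

lemma scheme_iff_increment:
  fixes Zm Z0 Z1 Psi0 Psi1 W V0 g :: grid and M \<beta> \<alpha> dt R0 R1 E :: real
  assumes E_def: "E = E1h Nx Ny hx hy (\<lambda>i j. (3 * Z0 i j - Zm i j) / 2)"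
    and g_def: "g = (\<lambda>i j. dFpot ((3 * Z0 i j - Zm i j) / 2))"
    and V0_def: "V0 = (\<lambda>i j. Lh (Lh Z0) i j + 2 * Lh (\<lambda>i j. (3 * Z0 i j - Zm i j) / 2) i j
      + \<alpha> * Z0 i j + R0 / sqrt E * g i j)"
    and dt: "0 < dt" and E: "0 < E"
  defines "d \<equiv> \<lambda>i j. Z1 i j - Z0 i j"
  shows "scheme Nx Ny hx hy M \<beta> \<alpha> dt Zm Z0 Psi0 R0 Z1 Psi1 W R1 \<longleftrightarrow>
    (\<forall>i j. in_grid Nx Ny i j \<longrightarrow>
        (2 / dt + \<beta>) * d i j - M * dt * Lh (W_response Nx Ny hx hy \<alpha> E g d) i j
          = 2 * Psi0 i j + M * dt * Lh V0 i j
      \<and> Psi1 i j = 2 * d i j / dt - Psi0 i j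
      \<and> W i j = V0 i j + W_response Nx Ny hx hy \<alpha> E g d i j)
    \<and> R1 = R0 + ipm g d / (2 * sqrt E)"
    (is "?scheme \<longleftrightarrow> (\<forall>i j. in_grid Nx Ny i j \<longrightarrow> ?inc i j \<and> ?psi i j \<and> ?W i j) \<and> ?R")
proof -
  have R_iff: "R1 - R0 = 1 / (2 * sqrt E) * ipm g d \<longleftrightarrow> ?R"
    by auto
  have psi_iff: "dt * ((Psi1 i j + Psi0 i j) / 2) = Z1 i j - Z0 i j \<longleftrightarrow> ?psi i j" for i j
    using dt by (auto simp: d_def field_simps)
  have lap_W: "Lh W i j = Lh V0 i j + Lh (W_response Nx Ny hx hy \<alpha> E g d) i j"
    if "\<And>i j. in_grid Nx Ny i j \<Longrightarrow> ?W i j" for i j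
    using that lap_lincomb[of Nx Ny hx hy 1 V0 1 "W_response Nx Ny hx hy \<alpha> E g d"]
      lap_cong[of W "\<lambda>i j. 1 * V0 i j + 1 * W_response Nx Ny hx hy \<alpha> E g d i j"] by simp
  have inc_iff: "Psi1 i j - Psi0 i j + \<beta> * dt * ((Psi1 i j + Psi0 i j) / 2) = M * dt * Lh W i j
      \<longleftrightarrow> ?inc i j" if "?psi i j" "Lh W i j = Lh V0 i j + Lh (W_response Nx Ny hx hy \<alpha> E g d) i j" for i j
    unfolding that using dt by (simp add: field_simps)
  have scheme_cells: "?scheme \<longleftrightarrow> (\<forall>i j. in_grid Nx Ny i j \<longrightarrow>
        Psi1 i j - Psi0 i j + \<beta> * dt * ((Psi1 i j + Psi0 i j) / 2) = M * dt * Lh W i j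
      \<and> dt * ((Psi1 i j + Psi0 i j) / 2) = Z1 i j - Z0 i j
      \<and> W i j = Lh (Lh (\<lambda>i j. (Z1 i j + Z0 i j) / 2)) i j + 2 * Lh (\<lambda>i j. (3 * Z0 i j - Zm i j) / 2) i j
          + \<alpha> * ((Z1 i j + Z0 i j) / 2) + (R1 + R0) / 2 / sqrt E * g i j)
    \<and> R1 - R0 = 1 / (2 * sqrt E) * ipm g d"
    unfolding scheme_def Let_def E_def g_def d_def ..
  note W_iff = W_cell_iff_response[where ?Z1.0 = Z1 and W = W and ?R1.0 = R1, OF V0_def E, folded d_def]
  show ?thesis
  proof
    assume ?scheme
    then have R: ?R and cells: "\<And>i j. in_grid Nx Ny i j \<Longrightarrow>
        Psi1 i j - Psi0 i j + \<beta> * dt * ((Psi1 i j + Psi0 i j) / 2) = M * dt * Lh W i j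
      \<and> ?psi i j \<and> ?W i j"
      unfolding scheme_cells psi_iff R_iff using W_iff by blast+
    have "Lh W i j = Lh V0 i j + Lh (W_response Nx Ny hx hy \<alpha> E g d) i j" for i j
      using cells by (intro lap_W) blast
    then show "(\<forall>i j. in_grid Nx Ny i j \<longrightarrow> ?inc i j \<and> ?psi i j \<and> ?W i j) \<and> ?R"
      using R cells inc_iff by blast
  next
    assume "(\<forall>i j. in_grid Nx Ny i j \<longrightarrow> ?inc i j \<and> ?psi i j \<and> ?W i j) \<and> ?R"
    then have R: ?R and cells: "\<And>i j. in_grid Nx Ny i j \<Longrightarrow> ?inc i j \<and> ?psi i j \<and> ?W i j"
      by blast+
    have "Lh W i j = Lh V0 i j + Lh (W_response Nx Ny hx hy \<alpha> E g d) i j" for i j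
      using cells by (intro lap_W) blast
    then show ?scheme
      unfolding scheme_cells psi_iff R_iff using R cells W_iff inc_iff by blast
  qed
qed

lemma scheme_of_increment:
  fixes Zm Z0 Psi0 V0 g :: grid and M \<beta> \<alpha> dt R0 E :: real
  assumes E_def: "E = E1h Nx Ny hx hy (\<lambda>i j. (3 * Z0 i j - Zm i j) / 2)"
    and g_def: "g = (\<lambda>i j. dFpot ((3 * Z0 i j - Zm i j) / 2))"
    and V0_def: "V0 = (\<lambda>i j. Lh (Lh Z0) i j + 2 * Lh (\<lambda>i j. (3 * Z0 i j - Zm i j) / 2) i j
      + \<alpha> * Z0 i j + R0 / sqrt E * g i j)"
    and dt: "0 < dt" and E: "0 < E"
    and \<delta>: "gridfun Nx Ny \<delta>" "\<And>i j. in_grid Nx Ny i j \<Longrightarrow>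
      (2 / dt + \<beta>) * \<delta> i j - M * dt * Lh (W_response Nx Ny hx hy \<alpha> E g \<delta>) i j
        = 2 * Psi0 i j + M * dt * Lh V0 i j"
  shows "scheme Nx Ny hx hy M \<beta> \<alpha> dt Zm Z0 Psi0 R0
    (\<lambda>i j. \<delta> i j + restrict_grid Nx Ny Z0 i j)
    (restrict_grid Nx Ny (\<lambda>i j. 2 * \<delta> i j / dt - Psi0 i j))
    (restrict_grid Nx Ny (\<lambda>i j. V0 i j + W_response Nx Ny hx hy \<alpha> E g \<delta> i j))
    (R0 + ipm g \<delta> / (2 * sqrt E))"
proof -
  let ?d = "\<lambda>i j. \<delta> i j + restrict_grid Nx Ny Z0 i j - Z0 i j"
  have inc: "?d i j = \<delta> i j" if "in_grid Nx Ny i j" for i j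
    using that by (simp add: restrict_grid_def)
  then have "Lh (W_response Nx Ny hx hy \<alpha> E g ?d) = Lh (W_response Nx Ny hx hy \<alpha> E g \<delta>)"
    "ipm g ?d = ipm g \<delta>"
    "\<And>i j. in_grid Nx Ny i j \<Longrightarrow> W_response Nx Ny hx hy \<alpha> E g ?d i j = W_response Nx Ny hx hy \<alpha> E g \<delta> i j"
    by (intro lap_cong ip_m_cong W_response_cong; blast intro: inc)+
  then show ?thesis
    unfolding scheme_iff_increment[OF E_def g_def V0_def dt E] using \<delta>(2) inc
    by (simp add: restrict_grid_def)
qed

lemma scheme_determined_by_increment:
  fixes Zm Z0 Psi0 V0 g :: grid and M \<beta> \<alpha> dt R0 E :: real
  assumes E_def: "E = E1h Nx Ny hx hy (\<lambda>i j. (3 * Z0 i j - Zm i j) / 2)"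
    and g_def: "g = (\<lambda>i j. dFpot ((3 * Z0 i j - Zm i j) / 2))"
    and V0_def: "V0 = (\<lambda>i j. Lh (Lh Z0) i j + 2 * Lh (\<lambda>i j. (3 * Z0 i j - Zm i j) / 2) i j
      + \<alpha> * Z0 i j + R0 / sqrt E * g i j)"
    and dt: "0 < dt" and E: "0 < E"
    and sol: "gridfun Nx Ny Z1" "gridfun Nx Ny Psi1" "gridfun Nx Ny W"
      "scheme Nx Ny hx hy M \<beta> \<alpha> dt Zm Z0 Psi0 R0 Z1 Psi1 W R1"
  defines "\<delta> \<equiv> restrict_grid Nx Ny (\<lambda>i j. Z1 i j - Z0 i j)"
  shows "\<And>i j. in_grid Nx Ny i j \<Longrightarrow>
      (2 / dt + \<beta>) * \<delta> i j - M * dt * Lh (W_response Nx Ny hx hy \<alpha> E g \<delta>) i j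
        = 2 * Psi0 i j + M * dt * Lh V0 i j"
    and "Z1 = (\<lambda>i j. \<delta> i j + restrict_grid Nx Ny Z0 i j)"
    and "Psi1 = restrict_grid Nx Ny (\<lambda>i j. 2 * \<delta> i j / dt - Psi0 i j)"
    and "W = restrict_grid Nx Ny (\<lambda>i j. V0 i j + W_response Nx Ny hx hy \<alpha> E g \<delta> i j)"
    and "R1 = R0 + ipm g \<delta> / (2 * sqrt E)"
proof -
  let ?d = "\<lambda>i j. Z1 i j - Z0 i j"
  have inc: "\<delta> i j = ?d i j" if "in_grid Nx Ny i j" for i j
    using that by (simp add: \<delta>_def restrict_grid_def)
  then have cong: "Lh (W_response Nx Ny hx hy \<alpha> E g \<delta>) = Lh (W_response Nx Ny hx hy \<alpha> E g ?d)"
    "ipm g \<delta> = ipm g ?d"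
    "\<And>i j. in_grid Nx Ny i j \<Longrightarrow> W_response Nx Ny hx hy \<alpha> E g \<delta> i j = W_response Nx Ny hx hy \<alpha> E g ?d i j"
    by (intro lap_cong ip_m_cong W_response_cong; blast intro: inc)+
  note cells = sol(4)[unfolded scheme_iff_increment[OF E_def g_def V0_def dt E]]
  show "\<And>i j. in_grid Nx Ny i j \<Longrightarrow>
      (2 / dt + \<beta>) * \<delta> i j - M * dt * Lh (W_response Nx Ny hx hy \<alpha> E g \<delta>) i j
        = 2 * Psi0 i j + M * dt * Lh V0 i j"
    using cells inc cong(1) by simp
  show "R1 = R0 + ipm g \<delta> / (2 * sqrt E)"
    using cells cong(2) by simp
  have "Z1 i j = \<delta> i j + Z0 i j" if "in_grid Nx Ny i j" for i j
    using inc[OF that] by simp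
  then show "Z1 = (\<lambda>i j. \<delta> i j + restrict_grid Nx Ny Z0 i j)"
    using sol(1) by (auto simp: gridfun_def fun_eq_iff \<delta>_def restrict_grid_def)
  show "Psi1 = restrict_grid Nx Ny (\<lambda>i j. 2 * \<delta> i j / dt - Psi0 i j)"
    "W = restrict_grid Nx Ny (\<lambda>i j. V0 i j + W_response Nx Ny hx hy \<alpha> E g \<delta> i j)"
    using sol(2,3) cells inc cong(3) by (auto simp: gridfun_def fun_eq_iff restrict_grid_def)
qed

lemma scheme_unique_solvable:
  assumes M: "0 < M" and \<beta>: "0 \<le> \<beta>" and \<alpha>: "0 \<le> \<alpha>" and dt: "0 < dt"
    and E1h_pos: "0 < E1h Nx Ny hx hy (\<lambda>i j. (3 * Z0 i j - Zm i j) / 2)"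
  shows "\<exists>!(Z1, Psi1, W, R1). gridfun Nx Ny Z1 \<and> gridfun Nx Ny Psi1 \<and> gridfun Nx Ny W \<and>
    scheme Nx Ny hx hy M \<beta> \<alpha> dt Zm Z0 Psi0 R0 Z1 Psi1 W R1"
proof -
  define E where "E = E1h Nx Ny hx hy (\<lambda>i j. (3 * Z0 i j - Zm i j) / 2)"
  define g where "g = (\<lambda>i j. dFpot ((3 * Z0 i j - Zm i j) / 2))"
  define V0 where "V0 = (\<lambda>i j. Lh (Lh Z0) i j + 2 * Lh (\<lambda>i j. (3 * Z0 i j - Zm i j) / 2) i j
    + \<alpha> * Z0 i j + R0 / sqrt E * g i j)"
  have E: "0 < E"
    using E1h_pos by (simp add: E_def)
  have "0 < 2 / dt + \<beta>" "0 < M * dt"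
    using dt \<beta> M by (simp_all add: add_pos_nonneg)
  from increment_equation_unique_solvable[OF this \<alpha> E, of g "\<lambda>i j. 2 * Psi0 i j + M * dt * Lh V0 i j"]
  obtain \<delta> where \<delta>: "gridfun Nx Ny \<delta>" "\<And>i j. in_grid Nx Ny i j \<Longrightarrow>
      (2 / dt + \<beta>) * \<delta> i j - M * dt * Lh (W_response Nx Ny hx hy \<alpha> E g \<delta>) i j
        = 2 * Psi0 i j + M * dt * Lh V0 i j"
    and \<delta>_unique: "\<And>d. gridfun Nx Ny d \<Longrightarrow> (\<forall>i j. in_grid Nx Ny i j \<longrightarrow>
      (2 / dt + \<beta>) * d i j - M * dt * Lh (W_response Nx Ny hx hy \<alpha> E g d) i j
        = 2 * Psi0 i j + M * dt * Lh V0 i j) \<Longrightarrow> d = \<delta>"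
    by blast
  note data = E_def g_def V0_def dt E
  show ?thesis
  proof (rule ex1I[of _ "((\<lambda>i j. \<delta> i j + restrict_grid Nx Ny Z0 i j),
      restrict_grid Nx Ny (\<lambda>i j. 2 * \<delta> i j / dt - Psi0 i j),
      restrict_grid Nx Ny (\<lambda>i j. V0 i j + W_response Nx Ny hx hy \<alpha> E g \<delta> i j),
      R0 + ipm g \<delta> / (2 * sqrt E))"], goal_cases)
    case 1
    show ?case
      using scheme_of_increment[OF data \<delta>] \<delta>(1) by (simp add: gridfun_def restrict_grid_def)
  next
    case (2 x)
    then show ?case
    proof (cases x rule: prod_cases4)
      case (fields Z1 Psi1 W R1)
      then have sol: "gridfun Nx Ny Z1" "gridfun Nx Ny Psi1" "gridfun Nx Ny W"
        "scheme Nx Ny hx hy M \<beta> \<alpha> dt Zm Z0 Psi0 R0 Z1 Psi1 W R1"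
        using 2 by simp_all
      have "restrict_grid Nx Ny (\<lambda>i j. Z1 i j - Z0 i j) = \<delta>"
        using scheme_determined_by_increment(1)[OF data sol] by (intro \<delta>_unique) simp_all
      then show ?thesis
        using scheme_determined_by_increment(2-5)[OF data sol] fields by simp
    qed
  qed
qed

end

theorem theorem3p2:
  fixes Lx Ly hx hy M \<beta> \<alpha> dt R0 :: real and Nx Ny :: nat
    and Zm Z0 Psi0 :: grid
  assumes "Lx > 0" "Ly > 0" "Nx > 0" "Ny > 0"
    and "hx = Lx / real Nx" "hy = Ly / real Ny"
    and "M > 0" "\<beta> > 0" "\<alpha> \<ge> 0" "dt > 0"
    and "E1h Nx Ny hx hy (\<lambda>i j. (3 * Z0 i j - Zm i j) / 2) > 0"
  shows "(\<exists>!(Z1, Psi1, W, R1). gridfun Nx Ny Z1 \<and> gridfun Nx Ny Psi1 \<and> gridfun Nx Ny W \<and>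
            scheme Nx Ny hx hy M \<beta> \<alpha> dt Zm Z0 Psi0 R0 Z1 Psi1 W R1)
     \<and> (\<forall>Z1 Psi1 W R1. gridfun Nx Ny Z1 \<and> gridfun Nx Ny Psi1 \<and> gridfun Nx Ny W \<and>
            scheme Nx Ny hx hy M \<beta> \<alpha> dt Zm Z0 Psi0 R0 Z1 Psi1 W R1 \<longrightarrow>
            ip_m Nx Ny hx hy Psi0 (\<lambda>_ _. 1) = 0 \<longrightarrow>
              ip_m Nx Ny hx hy Psi1 (\<lambda>_ _. 1) = 0
            \<and> ip_m Nx Ny hx hy Z1 (\<lambda>_ _. 1) = ip_m Nx Ny hx hy Z0 (\<lambda>_ _. 1)
            \<and> Ed_tilde Nx Ny hx hy \<alpha> M Z1 Z0 R1 Psi1 - Ed_tilde Nx Ny hx hy \<alpha> M Z0 Zm R0 Psi0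
                \<le> - (\<beta> / M) * dt *
                   (norm_neg1 Nx Ny hx hy (\<lambda>i j. (Psi1 i j + Psi0 i j) / 2))^2)"
proof -
  have "0 < hx" "0 < hy"
    using assms(1-6) by simp_all
  then interpret neumann_grid Nx Ny hx hy
    using assms(3,4) by unfold_locales
  have \<beta>: "0 \<le> \<beta>"
    using assms(8) by simp
  show ?thesis
  proof (intro conjI allI impI)
    show "\<exists>!(Z1, Psi1, W, R1). gridfun Nx Ny Z1 \<and> gridfun Nx Ny Psi1 \<and> gridfun Nx Ny W \<and>
        scheme Nx Ny hx hy M \<beta> \<alpha> dt Zm Z0 Psi0 R0 Z1 Psi1 W R1"
      by (rule scheme_unique_solvable[OF assms(7) \<beta> assms(9-11)])
  qed (elim conjE, rule scheme_energy_step[OF assms(7) \<beta> assms(10,11)]; assumption)+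
qed

end
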